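(* Let $M\in\mathbb{R}^{m\times k}$ and let $P\in\mathbb{R}^{k\times k}$ be a projector along $\ker M$. Let $f:\mathbb{R}^m\times\mathbb{R}^n\to\mathbb{R}^m$ be continuous and strongly monotone with respect to $x$, and let $r:\mathbb{R}^n\to\mathbb{R}^k$ be continuous. Then there is a continuous function $g:\mathbb{R}^n\to\mathbb{R}^k$ such that for all $z\in\mathbb{R}^k$ and $y\in\mathbb{R}^n$: $M^\top f(Mz,y)+P^\top r(y)=0$ if and only if $Pz=g(y)$.
   Context: $f(x,y)$ is strongly monotone with respect to $x$ if there is $c>0$ such that $\langle f(x,y)-f(\bar x,y),x-\bar x\rangle\ge c\|x-\bar x\|^2$ for all $y\in\mathbb{R}^n$ and $x,\bar x\in\mathbb{R}^m$. A projector along $\ker M$ is a matrix $P$ with $P^2=P$ and $\ker P=\ker M$. *)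

theory Defs
  imports "HOL-Analysis.Analysis"
begin

definition strongly_monotone_x :: "(real^'m \<Rightarrow> real^'n \<Rightarrow> real^'m) \<Rightarrow> bool" where
  "strongly_monotone_x f \<longleftrightarrow>
     (\<exists>c>0. \<forall>y x x'. inner (f x y - f x' y) (x - x') \<ge> c * (norm (x - x'))\<^sup>2)"

definition projector_along_ker :: "real^'k^'k \<Rightarrow> real^'k^'m \<Rightarrow> bool" where
  "projector_along_ker P M \<longleftrightarrow>
     P ** P = P \<and> {v. P *v v = 0} = {v. M *v v = 0}"

end

(* With Q = I - P, put H y z = M^T f (M z, y) + Q^T Q z + P^T r y. Since ker M and ker Q
   meet only in 0, the regularising term Q^T Q makes H y strongly monotone in z, uniformly
   in y. Hence H y has a unique zero g y (Brouwer applied to the projected map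
   x -> proj (x - H y x) on a large ball), and the estimate mu |z - g y| <= |H y z| makes g
   continuous. As M P = M and Q P = 0, H y (P z) is exactly the left-hand side of the
   equation, which therefore vanishes iff P z = g y. *)

theory Submission
  imports Defs
begin

definition strongly_monotone :: "real \<Rightarrow> ('a::real_inner \<Rightarrow> 'a) \<Rightarrow> bool" where
  "strongly_monotone \<mu> F \<longleftrightarrow> (\<forall>a b. \<mu> * (norm (a - b))\<^sup>2 \<le> inner (F a - F b) (a - b))"

lemma variational_inequality_compact_convex:
  fixes H :: "'a::euclidean_space \<Rightarrow> 'a"
  assumes S: "compact S" "convex S" "S \<noteq> {}" and contH: "continuous_on S H"
  obtains x where "x \<in> S" "\<And>z. z \<in> S \<Longrightarrow> 0 \<le> inner (H x) (z - x)"
proof -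
  \<comment> \<open>A fixed point of the projected step \<open>T\<close> satisfies the obtuse-angle criterion of the projection.\<close>
  define T where "T x = closest_point S (x - H x)" for x
  have "continuous_on S T"
    unfolding T_def
    by (intro continuous_on_compose2[OF continuous_on_closest_point[of S UNIV]] continuous_intros contH)
       (use S compact_imp_closed in auto)
  moreover have "T \<in> S \<rightarrow> S"
    unfolding T_def using S by (simp add: closest_point_in_set compact_imp_closed)
  ultimately obtain x where "x \<in> S" "T x = x"
    using brouwer[OF S] by blast
  moreover have "0 \<le> inner (H x) (z - x)" if "z \<in> S" for z
    using closest_point_dot[OF S(2) compact_imp_closed[OF S(1)] that, of "x - H x"] \<open>T x = x\<close>
    by (simp add: T_def inner_minus_left)
  ultimately show thesis using that by blast
qed

lemma variational_inequality_interior_eq_0: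
  fixes v x :: "'a::real_inner"
  assumes "x \<in> interior S" and vi: "\<And>z. z \<in> S \<Longrightarrow> 0 \<le> inner v (z - x)"
  shows "v = 0"
proof (rule ccontr)
  assume "v \<noteq> 0"
  obtain e where "e > 0" and e: "ball x e \<subseteq> S"
    using assms(1) by (meson mem_interior)
  define t where "t = e / (2 * norm v)"
  have "t > 0" "t * norm v < e"
    using \<open>e > 0\<close> \<open>v \<noteq> 0\<close> by (simp_all add: t_def)
  then have "x - t *\<^sub>R v \<in> S"
    using e by (auto simp: dist_norm)
  then have "0 \<le> - t * inner v v"
    using vi by fastforce
  with \<open>t > 0\<close> have "inner v v \<le> 0"
    by (simp add: mult_le_0_iff)
  with \<open>v \<noteq> 0\<close> show False
    using inner_gt_zero_iff[of v] by linarith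
qed

lemma strongly_monotone_imp_zero:
  fixes H :: "'a::euclidean_space \<Rightarrow> 'a"
  assumes "continuous_on UNIV H" "\<mu> > 0" "strongly_monotone \<mu> H"
  obtains x where "H x = 0"
proof -
  \<comment> \<open>Any solution of the variational inequality on the ball satisfies \<open>\<mu> |x| \<le> |H 0|\<close>,
    so for this radius it lies in the interior.\<close>
  define R where "R = norm (H 0) / \<mu> + 1"
  have "R > 0"
    unfolding R_def using \<open>\<mu> > 0\<close> by (simp add: add_nonneg_pos)
  then have "cball 0 R \<noteq> {}"
    by simp
  then obtain x where vi: "\<And>z. z \<in> cball 0 R \<Longrightarrow> 0 \<le> inner (H x) (z - x)"
    using variational_inequality_compact_convex[OF compact_cball convex_cball _
        continuous_on_subset[OF assms(1)]] by blast
  have "\<mu> * (norm x)\<^sup>2 \<le> inner (H x - H 0) x"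
    using assms(3) unfolding strongly_monotone_def by (metis diff_zero)
  also have "\<dots> \<le> - inner (H 0) x"
    using vi[of 0] \<open>R > 0\<close> by (simp add: inner_diff_left)
  also have "\<dots> \<le> norm (H 0) * norm x"
    using norm_cauchy_schwarz[of "- H 0" x] by simp
  finally have "\<mu> * norm x \<le> norm (H 0)"
    by (cases "x = 0") (auto simp: power2_eq_square)
  then have "x \<in> interior (cball 0 R)"
    using \<open>\<mu> > 0\<close> by (simp add: R_def field_simps)
  then have "H x = 0"
    by (rule variational_inequality_interior_eq_0) (rule vi)
  then show thesis by (rule that)
qed

lemma strongly_monotone_norm_diff_le:
  assumes "strongly_monotone \<mu> F"
  shows "\<mu> * norm (a - b) \<le> norm (F a - F b)"
proof -
  have "\<mu> * (norm (a - b))\<^sup>2 \<le> inner (F a - F b) (a - b)"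
    using assms unfolding strongly_monotone_def by blast
  also have "\<dots> \<le> norm (F a - F b) * norm (a - b)"
    by (rule norm_cauchy_schwarz)
  finally show ?thesis
    by (cases "a = b") (auto simp: power2_eq_square)
qed

lemma strongly_monotone_parametric_zero:
  fixes H :: "'b::topological_space \<Rightarrow> 'a::euclidean_space \<Rightarrow> 'a"
  assumes "\<mu> > 0" and mono: "\<And>y. strongly_monotone \<mu> (H y)"
    and cont: "\<And>y. continuous_on UNIV (H y)" and cont_param: "\<And>z. continuous_on UNIV (\<lambda>y. H y z)"
  obtains g :: "'b \<Rightarrow> 'a" where "continuous_on UNIV g" "\<And>y z. H y z = 0 \<longleftrightarrow> z = g y"
proof -
  have "\<exists>z. H y z = 0" for y
    using strongly_monotone_imp_zero[OF cont \<open>\<mu> > 0\<close> mono] by metis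
  then obtain g where g: "\<And>y. H y (g y) = 0"
    by metis
  have bound: "norm (z - g y) \<le> norm (H y z) / \<mu>" for y z
    using strongly_monotone_norm_diff_le[OF mono[of y], of z "g y"] g \<open>\<mu> > 0\<close>
    by (simp add: field_simps)
  have zero_iff: "H y z = 0 \<longleftrightarrow> z = g y" for y z
    using bound[where y = y and z = z] g[of y] \<open>\<mu> > 0\<close> by auto
  have lim: "(g \<longlongrightarrow> g y0) (at y0)" for y0
  proof -
    have "\<forall>y. norm (g y0 - g y) \<le> norm (H y (g y0)) / \<mu>"
      using bound by blast
    moreover have "((\<lambda>y. H y (g y0)) \<longlongrightarrow> H y0 (g y0)) (at y0)"
      using cont_param[of "g y0"] by (simp add: continuous_on_def)
    then have "((\<lambda>y. norm (H y (g y0)) / \<mu>) \<longlongrightarrow> 0) (at y0)"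
      unfolding g by (intro tendsto_divide_zero tendsto_norm_zero)
    ultimately have "((\<lambda>y. g y0 - g y) \<longlongrightarrow> 0) (at y0)"
      by (rule Lim_null_comparison[OF always_eventually])
    from tendsto_diff[OF tendsto_const[of "g y0"] this] show ?thesis
      by simp
  qed
  show thesis
    by (rule that[OF _ zero_iff]) (simp add: continuous_on_def lim)
qed

lemma continuous_on_matrix_vector_mult [continuous_intros]:
  fixes A :: "real^'n^'m"
  shows "continuous_on S g \<Longrightarrow> continuous_on S (\<lambda>x. A *v g x)"
  by (rule bounded_linear.continuous_on[OF matrix_vector_mul_bounded_linear])

lemma continuous_on_case_prod_compose:
  assumes "continuous_on UNIV (\<lambda>(x, y). f x y)" "continuous_on S a" "continuous_on S b"
  shows "continuous_on S (\<lambda>t. f (a t) (b t))"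
  using continuous_on_compose2[OF assms(1) continuous_on_Pair[OF assms(2,3)]] by simp

lemma strongly_monotone_x_iff:
  "strongly_monotone_x f \<longleftrightarrow> (\<exists>c>0. \<forall>y. strongly_monotone c (\<lambda>x. f x y))"
  unfolding strongly_monotone_x_def strongly_monotone_def by blast

lemma projector_along_ker_matrix_mul:
  assumes "projector_along_ker P M"
  shows "M ** P = M"
proof -
  have "P *v (v - P *v v) = 0" for v
    using assms by (simp add: projector_along_ker_def matrix_vector_mult_diff_distrib
        matrix_vector_mul_assoc)
  then have "M *v (v - P *v v) = 0" for v
    using assms by (auto simp: projector_along_ker_def set_eq_iff)
  then show ?thesis
    by (simp add: matrix_eq matrix_vector_mult_diff_distrib flip: matrix_vector_mul_assoc)
qed

lemma projector_along_ker_coercive: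
  assumes "projector_along_ker P M"
  obtains B where "B > 0"
    "\<And>d. B * (norm d)\<^sup>2 \<le> (norm (M *v d))\<^sup>2 + (norm ((mat 1 - P) *v d))\<^sup>2"
proof -
  define L where "L d = (M *v d, (mat 1 - P) *v d)" for d
  have "linear L"
    unfolding L_def
    by (intro bounded_linear.linear bounded_linear_Pair matrix_vector_mul_bounded_linear)
  moreover have "inj L"
    unfolding linear_inj_iff_eq_0[OF \<open>linear L\<close>]
  proof (intro allI impI)
    fix d assume "L d = 0"
    then have "M *v d = 0" "d = P *v d"
      by (simp_all add: L_def zero_prod_def matrix_vector_mult_diff_rdistrib)
    moreover from \<open>M *v d = 0\<close> have "P *v d = 0"
      using assms by (auto simp: projector_along_ker_def set_eq_iff)
    ultimately show "d = 0"
      by simp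
  qed
  ultimately obtain b where "b > 0" and b: "\<And>d. b * norm d \<le> norm (L d)"
    using linear_inj_bounded_below_pos by blast
  have "(b * norm d)\<^sup>2 \<le> (norm (L d))\<^sup>2" for d
    using b[of d] \<open>b > 0\<close> by (simp add: power_mono)
  then have "b\<^sup>2 * (norm d)\<^sup>2 \<le> (norm (M *v d))\<^sup>2 + (norm ((mat 1 - P) *v d))\<^sup>2" for d
    by (simp add: L_def norm_Pair power_mult_distrib)
  with \<open>b > 0\<close> show thesis
    using that[of "b\<^sup>2"] by simp
qed

lemma strongly_monotone_regularized:
  fixes M :: "real^'k^'m" and Q :: "real^'k^'l" and F :: "real^'m \<Rightarrow> real^'m"
  assumes mono: "strongly_monotone c F" and "c \<ge> 0"
    and coercive: "\<And>d. B * (norm d)\<^sup>2 \<le> (norm (M *v d))\<^sup>2 + (norm (Q *v d))\<^sup>2"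
  shows "strongly_monotone (min c 1 * B)
           (\<lambda>z. transpose M *v F (M *v z) + transpose Q *v (Q *v z) + v)"
    (is "strongly_monotone _ ?H")
  unfolding strongly_monotone_def
proof (intro allI)
  fix a b :: "real^'k"
  let ?d = "a - b"
  have "min c 1 * B * (norm ?d)\<^sup>2
      \<le> min c 1 * (norm (M *v ?d))\<^sup>2 + min c 1 * (norm (Q *v ?d))\<^sup>2"
    using coercive[of ?d] \<open>c \<ge> 0\<close> by (simp add: mult.assoc mult_left_mono flip: distrib_left)
  also have "\<dots> \<le> c * (norm (M *v ?d))\<^sup>2 + 1 * (norm (Q *v ?d))\<^sup>2"
    by (intro add_mono mult_right_mono) auto
  also have "\<dots> \<le> inner (F (M *v a) - F (M *v b)) (M *v ?d) + inner (Q *v ?d) (Q *v ?d)"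
    using mono by (simp add: strongly_monotone_def matrix_vector_mult_diff_distrib power2_norm_eq_inner)
  also have "\<dots> = inner (?H a - ?H b) ?d"
    by (simp add: dot_lmul_matrix inner_diff_left inner_add_left matrix_vector_mult_diff_distrib
        algebra_simps)
  finally show "min c 1 * B * (norm ?d)\<^sup>2 \<le> inner (?H a - ?H b) ?d" .
qed

theorem lemma3:
  fixes M :: "real^'k^'m" and P :: "real^'k^'k"
    and f :: "real^'m \<Rightarrow> real^'n \<Rightarrow> real^'m" and r :: "real^'n \<Rightarrow> real^'k"
  assumes "projector_along_ker P M"
    and "continuous_on UNIV (\<lambda>(x, y). f x y)"
    and "strongly_monotone_x f"
    and "continuous_on UNIV r"
  shows "\<exists>g :: real^'n \<Rightarrow> real^'k. continuous_on UNIV g \<and>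
           (\<forall>z y. (transpose M *v f (M *v z) y + transpose P *v r y = 0
                    \<longleftrightarrow> P *v z = g y))"
proof -
  obtain c where "c > 0" and mono: "\<And>y. strongly_monotone c (\<lambda>x. f x y)"
    using assms(3) strongly_monotone_x_iff by blast
  obtain B where "B > 0"
    and coercive: "\<And>d. B * (norm d)\<^sup>2 \<le> (norm (M *v d))\<^sup>2 + (norm ((mat 1 - P) *v d))\<^sup>2"
    using projector_along_ker_coercive[OF assms(1)] by blast
  define H where "H y z = transpose M *v f (M *v z) y + transpose (mat 1 - P) *v ((mat 1 - P) *v z)
    + transpose P *v r y" for y z
  have "min c 1 * B > 0"
    using \<open>c > 0\<close> \<open>B > 0\<close> by simp
  moreover have "strongly_monotone (min c 1 * B) (H y)" for y
    unfolding H_def using strongly_monotone_regularized[OF mono _ coercive] \<open>c > 0\<close> by simp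
  moreover have "continuous_on UNIV (H y)" "continuous_on UNIV (\<lambda>y. H y z)" for y z
    unfolding H_def
    by (auto intro!: continuous_intros continuous_on_case_prod_compose[OF assms(2)] assms(4) simp del: transpose_matrix_vector)
  ultimately obtain g where "continuous_on UNIV g" and zero_iff: "\<And>y z. H y z = 0 \<longleftrightarrow> z = g y"
    by (rule strongly_monotone_parametric_zero) blast
  have "M *v (P *v z) = M *v z" "P *v (P *v z) = P *v z" for z
    using projector_along_ker_matrix_mul[OF assms(1)] assms(1)
    by (simp_all add: projector_along_ker_def matrix_vector_mul_assoc)
  then have "transpose M *v f (M *v z) y + transpose P *v r y = H y (P *v z)" for z y
    by (simp add: H_def matrix_vector_mult_diff_rdistrib)
  with \<open>continuous_on UNIV g\<close> zero_iff show ?thesis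
    by auto
qed

end
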